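(* Let $\theta$ be a $\mathbb C$-linear operator on $\Lambda$. Then $E^a\theta=\theta E^a$ for all $a\in\mathbb C$ if and only if $\theta$ is a complex formal power series in the iterated symmetric derivatives $\mathbf D_1,\mathbf D_2,\dots$. That is, if and only if there are complex numbers $c_k$, indexed by finitely supported sequences $k=(k_1,k_2,\dots)$ of nonnegative integers, such that $\theta p=\sum_k c_k\mathbf D_1^{k_1}\mathbf D_2^{k_2}\cdots p$ for every $p\in\Lambda$.
   Context: $\Lambda$ is the algebra of symmetric functions with complex coefficients in the variables $\mathbf y=(y_1,y_2,\dots)$, with basis the monomial symmetric functions $m_\lambda(\mathbf y)$, $\lambda$ ranging over partitions. For $i\ge1$, the $i$-th symmetric derivative $\mathbf D_i$ is the linear operator on $\Lambda$ given by: - $\mathbf D_i m_\lambda=i!\,m_{\lambda\setminus i}$ if $i$ is a part of $\lambda$, where $\lambda\setminus i$ removes one part equal to $i$; - $\mathbf D_i m_\lambda=0$ otherwise. For $a\in\mathbb C$, the symmetric shift $E^a$ is the operator $E^ap(y_1,y_2,\dots)=p(a,y_1,y_2,\dots)$. For each $p$ only finitely many terms of the formal series act nonzero, so the series is well defined. *)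

theory Defs
  imports Complex_Main "HOL-Library.Multiset"
begin

text \<open>Symmetric functions in the variables y_0, y_1, y_2, ... (0-based indexing of
the paper's y_1, y_2, ...), represented by their coefficient function on
exponent vectors (monomials) alpha :: nat => nat with finite support.\<close>

type_synonym expo = "nat \<Rightarrow> nat"
type_synonym sfun = "expo \<Rightarrow> complex"

definition expos :: "expo set" where
  "expos = {\<alpha>. finite {n. \<alpha> n \<noteq> 0}}"

definition degree_ex :: "expo \<Rightarrow> nat" where
  "degree_ex \<alpha> = (\<Sum>n\<in>{n. \<alpha> n \<noteq> 0}. \<alpha> n)"

definition shape :: "expo \<Rightarrow> nat multiset" where
  "shape \<alpha> = image_mset \<alpha> (mset_set {n. \<alpha> n \<noteq> 0})"

definition Lambda :: "sfun set" where
  "Lambda = {p. (\<forall>\<alpha>. \<alpha> \<notin> expos \<longrightarrow> p \<alpha> = 0)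
              \<and> (\<exists>d. \<forall>\<alpha>. degree_ex \<alpha> > d \<longrightarrow> p \<alpha> = 0)
              \<and> (\<forall>\<sigma> \<alpha>. bij \<sigma> \<longrightarrow> \<alpha> \<in> expos \<longrightarrow> p (\<alpha> \<circ> \<sigma>) = p \<alpha>)}"

definition msym :: "nat multiset \<Rightarrow> sfun" where
  "msym mu = (\<lambda>\<alpha>. if \<alpha> \<in> expos \<and> shape \<alpha> = mu then 1 else 0)"

definition canon :: "nat multiset \<Rightarrow> expo" where
  "canon mu = (\<lambda>n. if n < size mu then sorted_list_of_multiset mu ! n else 0)"

definition mcoeff :: "sfun \<Rightarrow> nat multiset \<Rightarrow> complex" where
  "mcoeff p mu = p (canon mu)"

text \<open>Symmetric derivative D_i, the linear extension of
D_i m_lambda = i! m_(lambda minus i) if i in lambda, 0 otherwise.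
The coefficient of m_mu in D_i p is i! times the coefficient of m_(mu + {i}) in p.\<close>
definition symD :: "nat \<Rightarrow> sfun \<Rightarrow> sfun" where
  "symD i p = (\<lambda>\<beta>. if \<beta> \<in> expos then of_nat (fact i) * mcoeff p (shape \<beta> + {#i#}) else 0)"

definition cons_ex :: "nat \<Rightarrow> expo \<Rightarrow> expo" where
  "cons_ex j \<beta> = (\<lambda>n. case n of 0 \<Rightarrow> j | Suc m \<Rightarrow> \<beta> m)"

text \<open>Symmetric shift: (E^a p)(y_0, y_1, ...) = p(a, y_0, y_1, ...).
The coefficient of y^beta is sum_j [coeff of a^j y^beta in p] a^j.\<close>
definition symE :: "complex \<Rightarrow> sfun \<Rightarrow> sfun" where
  "symE a p = (\<lambda>\<beta>. if \<beta> \<in> expos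
      then (\<Sum>j\<in>{j. p (cons_ex j \<beta>) \<noteq> 0}. p (cons_ex j \<beta>) * a ^ j) else 0)"

text \<open>Multi-indices k = (k_1, k_2, ...): here k i is the exponent of D_(i+1).\<close>
definition fin_seqs :: "(nat \<Rightarrow> nat) set" where
  "fin_seqs = {k. finite {i. k i \<noteq> 0}}"

definition supp_bound :: "(nat \<Rightarrow> nat) \<Rightarrow> nat" where
  "supp_bound k = (LEAST N. \<forall>i\<ge>N. k i = 0)"

definition Dmono :: "(nat \<Rightarrow> nat) \<Rightarrow> sfun \<Rightarrow> sfun" where
  "Dmono k = foldr (\<lambda>i f. (symD (Suc i) ^^ k i) \<circ> f) [0..<supp_bound k] id"

definition linear_on_Lambda :: "(sfun \<Rightarrow> sfun) \<Rightarrow> bool" where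
  "linear_on_Lambda \<theta> \<longleftrightarrow> (\<forall>p\<in>Lambda. \<theta> p \<in> Lambda)
     \<and> (\<forall>p\<in>Lambda. \<forall>q\<in>Lambda. \<theta> (\<lambda>\<alpha>. p \<alpha> + q \<alpha>) = (\<lambda>\<alpha>. \<theta> p \<alpha> + \<theta> q \<alpha>))
     \<and> (\<forall>c. \<forall>p\<in>Lambda. \<theta> (\<lambda>\<alpha>. c * p \<alpha>) = (\<lambda>\<alpha>. c * \<theta> p \<alpha>))"

text \<open>The formal series sum_k c_k D^k p (only finitely many k contribute).\<close>
definition Dseries :: "((nat \<Rightarrow> nat) \<Rightarrow> complex) \<Rightarrow> sfun \<Rightarrow> sfun" where
  "Dseries c p = (\<lambda>\<beta>. \<Sum>k\<in>{k\<in>fin_seqs. Dmono k p \<noteq> (\<lambda>_. 0)}. c k * Dmono k p \<beta>)"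

end

theory Submission
  imports Defs "HOL-Combinatorics.Permutations"
begin

text \<open>Work in coefficient coordinates: an element of Lambda is given by the function \<open>f\<close> on
partitions recording its \<open>m_\<lambda>\<close>-coefficients. For a partition \<mu> let \<open>S_\<mu>\<close> (\<open>coeff_shift \<mu>\<close>) be the
operator sending \<open>f\<close> to \<open>\<nu> \<mapsto> f (\<nu> + \<mu>)\<close>. In these coordinates \<open>E^a = \<Sum>_j a^j S_(j)\<close>, and
\<open>D_1^k_1 D_2^k_2 \<cdots>\<close> is a nonzero multiple of \<open>S_\<mu>\<close>, where \<mu> has \<open>k_i\<close> parts equal to \<open>i\<close>; as
\<open>k \<mapsto> \<mu>\<close> is a bijection onto all partitions, the power series in the \<open>D_i\<close> are exactly the
operators \<open>f \<mapsto> (\<nu> \<mapsto> \<Sum>_\<rho> C_\<rho> f (\<nu> + \<rho>))\<close>. These commute with every \<open>S_\<mu>\<close>, hence with every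
\<open>E^a\<close>. Conversely, if \<theta> commutes with all \<open>E^a\<close>, comparing coefficients of the resulting
polynomial identity in \<open>a\<close> shows that \<theta> commutes with each \<open>S_(j)\<close>, hence with every \<open>S_\<mu>\<close>.
So the \<nu>-coefficient of \<open>\<theta> p\<close> is the constant term of \<open>\<theta> (S_\<nu> p)\<close>, which by linearity is
\<open>\<Sum>_\<rho> C_\<rho> f (\<nu> + \<rho>)\<close> with \<open>C_\<rho>\<close> the constant term of \<open>\<theta> m_\<rho>\<close>.\<close>

section \<open>Coefficient functions on partitions\<close>

definition is_partition :: "nat multiset \<Rightarrow> bool" where
  "is_partition \<nu> \<longleftrightarrow> 0 \<notin># \<nu>"

definition of_coeffs :: "(nat multiset \<Rightarrow> complex) \<Rightarrow> sfun" where
  "of_coeffs f = (\<lambda>\<alpha>. if \<alpha> \<in> expos then f (shape \<alpha>) else 0)"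

definition vanishes_above :: "(nat multiset \<Rightarrow> complex) \<Rightarrow> nat \<Rightarrow> bool" where
  "vanishes_above f d \<longleftrightarrow> (\<forall>\<nu>. is_partition \<nu> \<longrightarrow> d < sum_mset \<nu> \<longrightarrow> f \<nu> = 0)"

lemma is_partition_empty [simp]: "is_partition {#}"
  unfolding is_partition_def by simp

lemma is_partition_add [simp]: "is_partition (\<mu> + \<nu>) \<longleftrightarrow> is_partition \<mu> \<and> is_partition \<nu>"
  unfolding is_partition_def by auto

lemma is_partition_add_mset [simp]: "is_partition (add_mset x \<nu>) \<longleftrightarrow> 0 < x \<and> is_partition \<nu>"
  unfolding is_partition_def by auto

lemma is_partition_shape: "is_partition (shape \<alpha>)"
  unfolding is_partition_def shape_def
  by (cases "finite {n. \<alpha> n \<noteq> 0}") auto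

lemma degree_ex_eq_sum_shape: "degree_ex \<alpha> = sum_mset (shape \<alpha>)"
  unfolding degree_ex_def shape_def by (simp add: sum_unfold_sum_mset)

lemma
  assumes "\<alpha> \<in> expos" "bij \<sigma>"
  shows comp_bij_in_expos: "\<alpha> \<circ> \<sigma> \<in> expos"
    and shape_comp_bij: "shape (\<alpha> \<circ> \<sigma>) = shape \<alpha>"
proof -
  let ?S = "{n. \<alpha> n \<noteq> 0}"
  have S: "finite ?S" using assms(1) by (simp add: expos_def)
  have supp: "{n. (\<alpha> \<circ> \<sigma>) n \<noteq> 0} = \<sigma> -` ?S" by auto
  have inj: "inj \<sigma>" using assms(2) bij_is_inj by blast
  show "\<alpha> \<circ> \<sigma> \<in> expos" unfolding expos_def using supp finite_vimageI[OF S inj] by simp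
  have im: "\<sigma> ` (\<sigma> -` ?S) = ?S" using bij_is_surj[OF assms(2)] by (rule surj_image_vimage_eq)
  have "shape (\<alpha> \<circ> \<sigma>) = image_mset \<alpha> (image_mset \<sigma> (mset_set (\<sigma> -` ?S)))"
    unfolding shape_def supp by (simp add: multiset.map_comp)
  also have "image_mset \<sigma> (mset_set (\<sigma> -` ?S)) = mset_set ?S"
    using image_mset_mset_set[of \<sigma> "\<sigma> -` ?S"] inj im by (metis inj_on_subset subset_UNIV)
  finally show "shape (\<alpha> \<circ> \<sigma>) = shape \<alpha>" unfolding shape_def by simp
qed

lemma
  assumes "is_partition \<nu>"
  shows canon_in_expos: "canon \<nu> \<in> expos"
    and shape_canon: "shape (canon \<nu>) = \<nu>"
proof -
  let ?xs = "sorted_list_of_multiset \<nu>"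
  have len: "length ?xs = size \<nu>" by (metis mset_sorted_list_of_multiset size_mset)
  have "?xs ! n \<noteq> 0" if "n < size \<nu>" for n
    using assms that len unfolding is_partition_def by (metis nth_mem set_sorted_list_of_multiset)
  then have supp: "{n. canon \<nu> n \<noteq> 0} = {..<size \<nu>}"
    unfolding canon_def by auto
  show "canon \<nu> \<in> expos" by (simp only: expos_def mem_Collect_eq supp finite_lessThan)
  have "shape (canon \<nu>) = mset (map (canon \<nu>) [0..<size \<nu>])"
    unfolding shape_def supp mset_set_upto_eq_mset_upto by simp
  also have "map (canon \<nu>) [0..<size \<nu>] = map (nth ?xs) [0..<length ?xs]"
    using len by (auto simp: canon_def)
  finally show "shape (canon \<nu>) = \<nu>" by (simp add: map_nth)
qed

lemma mset_map_upt_eq_shape: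
  assumes "\<alpha> \<in> expos" "{n. \<alpha> n \<noteq> 0} \<subseteq> {..<N}"
  shows "mset (map \<alpha> [0..<N]) = shape \<alpha> + replicate_mset (N - size (shape \<alpha>)) 0"
proof -
  let ?S = "{n. \<alpha> n \<noteq> 0}"
  have fS: "finite ?S" using assms(1) by (simp add: expos_def)
  have "mset (map \<alpha> [0..<N]) = image_mset \<alpha> (mset_set ?S) + image_mset \<alpha> (mset_set ({..<N} - ?S))"
    using assms(2) fS
    by (metis image_mset_union mset_map mset_set_upto_eq_mset_upto Diff_partition Diff_disjoint
        finite_lessThan mset_set_Union finite_Diff)
  also have "image_mset \<alpha> (mset_set ({..<N} - ?S)) = image_mset (\<lambda>_. 0) (mset_set ({..<N} - ?S))"
    by (rule image_mset_cong) auto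
  also have "\<dots> = replicate_mset (card ({..<N} - ?S)) 0"
    by (simp add: image_mset_const_eq)
  also have "card ({..<N} - ?S) = N - size (shape \<alpha>)"
    using assms(2) fS by (simp add: card_Diff_subset shape_def)
  finally show ?thesis unfolding shape_def .
qed

lemma Lambda_eq_if_shape_eq:
  assumes p: "p \<in> Lambda" and expos: "\<alpha> \<in> expos" "\<beta> \<in> expos" and sh: "shape \<alpha> = shape \<beta>"
  shows "p \<alpha> = p \<beta>"
proof -
  have "finite ({n. \<alpha> n \<noteq> 0} \<union> {n. \<beta> n \<noteq> 0})" using expos by (simp add: expos_def)
  then obtain N where N: "{n. \<alpha> n \<noteq> 0} \<union> {n. \<beta> n \<noteq> 0} \<subseteq> {..<N}"
    using finite_nat_set_iff_bounded by (metis lessThan_iff subsetI)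
  have "mset (map \<alpha> [0..<N]) = mset (map \<beta> [0..<N])"
    using mset_map_upt_eq_shape[OF expos(1)] mset_map_upt_eq_shape[OF expos(2)] N sh by auto
  then obtain \<pi> where \<pi>: "\<pi> permutes {..<length (map \<beta> [0..<N])}"
      "permute_list \<pi> (map \<beta> [0..<N]) = map \<alpha> [0..<N]"
    by (rule mset_eq_permutation)
  have \<pi>N: "\<pi> permutes {..<N}" using \<pi>(1) by simp
  have "\<alpha> i = \<beta> (\<pi> i)" for i
  proof (cases "i < N")
    case True
    have "\<alpha> i = permute_list \<pi> (map \<beta> [0..<N]) ! i" using \<pi>(2) True by simp
    also have "\<dots> = map \<beta> [0..<N] ! \<pi> i" using permute_list_nth[OF \<pi>(1)] True by simp
    finally show ?thesis using True permutes_in_image[OF \<pi>N, of i] by simp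
  next
    case False
    then have "\<alpha> i = 0" "\<beta> i = 0" using N by auto
    then show ?thesis using False permutes_not_in[OF \<pi>N] by simp
  qed
  then have "\<alpha> = \<beta> \<circ> \<pi>" by auto
  then show ?thesis using p expos(2) permutes_bij[OF \<pi>N] unfolding Lambda_def by auto
qed

lemma mcoeff_of_coeffs: "is_partition \<nu> \<Longrightarrow> mcoeff (of_coeffs f) \<nu> = f \<nu>"
  unfolding mcoeff_def of_coeffs_def by (simp add: canon_in_expos shape_canon)

lemma of_coeffs_mcoeff: "p \<in> Lambda \<Longrightarrow> of_coeffs (mcoeff p) = p"
proof
  fix \<alpha> assume p: "p \<in> Lambda"
  show "of_coeffs (mcoeff p) \<alpha> = p \<alpha>"
  proof (cases "\<alpha> \<in> expos")
    case True
    then show ?thesis unfolding of_coeffs_def mcoeff_def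
      using Lambda_eq_if_shape_eq[OF p canon_in_expos True] is_partition_shape shape_canon
      by simp
  next
    case False
    then show ?thesis using p unfolding of_coeffs_def Lambda_def by simp
  qed
qed

lemma of_coeffs_cong: "(\<And>\<nu>. is_partition \<nu> \<Longrightarrow> f \<nu> = g \<nu>) \<Longrightarrow> of_coeffs f = of_coeffs g"
  unfolding of_coeffs_def using is_partition_shape by auto

lemma of_coeffs_zero: "of_coeffs (\<lambda>_. 0) = (\<lambda>_. 0)"
  unfolding of_coeffs_def by auto

lemma of_coeffs_in_Lambda: "vanishes_above f d \<Longrightarrow> of_coeffs f \<in> Lambda"
  unfolding Lambda_def
proof (intro CollectI conjI allI impI)
  show "\<alpha> \<notin> expos \<Longrightarrow> of_coeffs f \<alpha> = 0" for \<alpha> by (simp add: of_coeffs_def)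
  show "vanishes_above f d \<Longrightarrow> \<exists>d. \<forall>\<alpha>. d < degree_ex \<alpha> \<longrightarrow> of_coeffs f \<alpha> = 0"
    using is_partition_shape unfolding vanishes_above_def of_coeffs_def degree_ex_eq_sum_shape
    by auto
  show "bij \<sigma> \<Longrightarrow> \<alpha> \<in> expos \<Longrightarrow> of_coeffs f (\<alpha> \<circ> \<sigma>) = of_coeffs f \<alpha>" for \<sigma> \<alpha>
    using comp_bij_in_expos shape_comp_bij unfolding of_coeffs_def by simp
qed

lemma vanishes_above_mono: "vanishes_above f d \<Longrightarrow> d \<le> e \<Longrightarrow> vanishes_above f e"
  unfolding vanishes_above_def by auto

lemma vanishes_above_add:
  "vanishes_above f d \<Longrightarrow> is_partition \<nu> \<Longrightarrow> is_partition \<mu> \<Longrightarrow> d < sum_mset \<nu> \<Longrightarrow> f (\<nu> + \<mu>) = 0"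
  unfolding vanishes_above_def by simp

lemma Lambda_vanishes_above:
  assumes "p \<in> Lambda"
  obtains d where "vanishes_above (mcoeff p) d"
proof -
  obtain d where d: "\<forall>\<alpha>. degree_ex \<alpha> > d \<longrightarrow> p \<alpha> = 0"
    using assms unfolding Lambda_def by blast
  have "vanishes_above (mcoeff p) d"
    unfolding vanishes_above_def mcoeff_def
    using d by (simp add: degree_ex_eq_sum_shape shape_canon)
  then show thesis by (rule that)
qed

lemma vanishes_above_of_coeffs_iff:
  "vanishes_above (mcoeff (of_coeffs f)) d \<longleftrightarrow> vanishes_above f d"
  unfolding vanishes_above_def by (simp add: mcoeff_of_coeffs)

lemma Lambda_lincomb:
  assumes "p \<in> Lambda" "q \<in> Lambda"
  shows "(\<lambda>\<alpha>. a * p \<alpha> + b * q \<alpha>) \<in> Lambda"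
proof -
  obtain d e where d: "vanishes_above (mcoeff p) d" and e: "vanishes_above (mcoeff q) e"
    using Lambda_vanishes_above assms by metis
  have "(\<lambda>\<alpha>. a * p \<alpha> + b * q \<alpha>) = of_coeffs (\<lambda>\<nu>. a * mcoeff p \<nu> + b * mcoeff q \<nu>)"
  proof
    fix \<alpha>
    have "p \<alpha> = of_coeffs (mcoeff p) \<alpha>" "q \<alpha> = of_coeffs (mcoeff q) \<alpha>"
      using of_coeffs_mcoeff assms by simp_all
    then show "a * p \<alpha> + b * q \<alpha> = of_coeffs (\<lambda>\<nu>. a * mcoeff p \<nu> + b * mcoeff q \<nu>) \<alpha>"
      unfolding of_coeffs_def by simp
  qed
  moreover have "vanishes_above (\<lambda>\<nu>. a * mcoeff p \<nu> + b * mcoeff q \<nu>) (max d e)"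
    using d e unfolding vanishes_above_def by simp
  ultimately show ?thesis using of_coeffs_in_Lambda by simp
qed

lemma zero_in_Lambda: "(\<lambda>_. 0) \<in> Lambda"
  using of_coeffs_in_Lambda[of "\<lambda>_. 0" 0] of_coeffs_zero by (simp add: vanishes_above_def)

lemma Lambda_sum:
  assumes "finite A" "\<And>i. i \<in> A \<Longrightarrow> q i \<in> Lambda"
  shows "(\<lambda>\<alpha>. \<Sum>i\<in>A. c i * q i \<alpha>) \<in> Lambda"
  using assms
proof (induction A rule: finite_induct)
  case empty
  then show ?case using zero_in_Lambda by simp
next
  case (insert x F)
  have "(\<lambda>\<alpha>. c x * q x \<alpha> + 1 * (\<Sum>i\<in>F. c i * q i \<alpha>)) \<in> Lambda"
    using insert by (intro Lambda_lincomb) auto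
  then show ?case using insert by simp
qed

section \<open>Linear operators on Lambda\<close>

lemma
  assumes "linear_on_Lambda \<theta>" "p \<in> Lambda"
  shows linear_on_Lambda_in_Lambda: "\<theta> p \<in> Lambda"
    and linear_on_Lambda_scale: "\<theta> (\<lambda>\<alpha>. c * p \<alpha>) = (\<lambda>\<alpha>. c * \<theta> p \<alpha>)"
    and linear_on_Lambda_add: "q \<in> Lambda \<Longrightarrow> \<theta> (\<lambda>\<alpha>. p \<alpha> + q \<alpha>) = (\<lambda>\<alpha>. \<theta> p \<alpha> + \<theta> q \<alpha>)"
  using assms unfolding linear_on_Lambda_def by blast+

lemma linear_on_Lambda_sum:
  assumes lin: "linear_on_Lambda \<theta>" and "finite A" "\<And>i. i \<in> A \<Longrightarrow> q i \<in> Lambda"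
  shows "\<theta> (\<lambda>\<alpha>. \<Sum>i\<in>A. c i * q i \<alpha>) = (\<lambda>\<alpha>. \<Sum>i\<in>A. c i * \<theta> (q i) \<alpha>)"
  using assms(2,3)
proof (induction A rule: finite_induct)
  case empty
  show ?case using linear_on_Lambda_scale[OF lin zero_in_Lambda, of 0] by simp
next
  case (insert x F)
  have x: "(\<lambda>\<alpha>. c x * q x \<alpha>) \<in> Lambda"
    using Lambda_lincomb[of "q x" "q x" "c x" 0] insert.prems by simp
  have F: "(\<lambda>\<alpha>. \<Sum>i\<in>F. c i * q i \<alpha>) \<in> Lambda"
    using Lambda_sum[of F q c] insert by simp
  have "\<theta> (\<lambda>\<alpha>. \<Sum>i\<in>insert x F. c i * q i \<alpha>)
      = \<theta> (\<lambda>\<alpha>. (\<lambda>\<alpha>. c x * q x \<alpha>) \<alpha> + (\<lambda>\<alpha>. \<Sum>i\<in>F. c i * q i \<alpha>) \<alpha>)"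
    using insert.hyps by simp
  also have "\<dots> = (\<lambda>\<alpha>. \<theta> (\<lambda>\<alpha>. c x * q x \<alpha>) \<alpha> + \<theta> (\<lambda>\<alpha>. \<Sum>i\<in>F. c i * q i \<alpha>) \<alpha>)"
    using linear_on_Lambda_add[OF lin x F] by simp
  also have "\<theta> (\<lambda>\<alpha>. c x * q x \<alpha>) = (\<lambda>\<alpha>. c x * \<theta> (q x) \<alpha>)"
    using linear_on_Lambda_scale[OF lin] insert.prems by simp
  also have "\<theta> (\<lambda>\<alpha>. \<Sum>i\<in>F. c i * q i \<alpha>) = (\<lambda>\<alpha>. \<Sum>i\<in>F. c i * \<theta> (q i) \<alpha>)"
    using insert by simp
  finally show ?case using insert.hyps by simp
qed

definition partitions_le :: "nat \<Rightarrow> nat multiset set" where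
  "partitions_le d = {\<nu>. is_partition \<nu> \<and> sum_mset \<nu> \<le> d}"

lemma size_le_sum_mset_partition: "is_partition \<nu> \<Longrightarrow> size \<nu> \<le> sum_mset \<nu>"
  by (induction \<nu>) auto

lemma finite_partitions_le: "finite (partitions_le d)"
proof (rule finite_subset)
  show "partitions_le d \<subseteq> (\<Union>n\<le>d. multisets_of_size {..d} n)"
  proof
    fix \<nu> assume "\<nu> \<in> partitions_le d"
    then have \<nu>: "is_partition \<nu>" "sum_mset \<nu> \<le> d" unfolding partitions_le_def by auto
    have "set_mset \<nu> \<subseteq> {..d}" using \<nu>(2) sum_mset.remove by fastforce
    moreover have "size \<nu> \<le> d" using size_le_sum_mset_partition[OF \<nu>(1)] \<nu>(2) by simp
    ultimately show "\<nu> \<in> (\<Union>n\<le>d. multisets_of_size {..d} n)"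
      unfolding multisets_of_size_def by blast
  qed
qed auto

lemma msym_eq_of_coeffs: "msym \<rho> = of_coeffs (\<lambda>\<nu>. if \<nu> = \<rho> then 1 else 0)"
  unfolding msym_def of_coeffs_def by auto

lemma msym_in_Lambda: "msym \<rho> \<in> Lambda"
  unfolding msym_eq_of_coeffs
  by (rule of_coeffs_in_Lambda[of _ "sum_mset \<rho>"]) (auto simp: vanishes_above_def)

lemma Lambda_eq_sum_msym:
  assumes q: "q \<in> Lambda" and d: "vanishes_above (mcoeff q) d"
  shows "q = (\<lambda>\<alpha>. \<Sum>\<rho>\<in>partitions_le d. mcoeff q \<rho> * msym \<rho> \<alpha>)"
proof
  fix \<alpha>
  show "q \<alpha> = (\<Sum>\<rho>\<in>partitions_le d. mcoeff q \<rho> * msym \<rho> \<alpha>)"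
  proof (cases "\<alpha> \<in> expos")
    case False
    then show ?thesis using q unfolding Lambda_def msym_def by simp
  next
    case True
    have "(\<Sum>\<rho>\<in>partitions_le d. mcoeff q \<rho> * msym \<rho> \<alpha>)
        = (\<Sum>\<rho>\<in>partitions_le d. if shape \<alpha> = \<rho> then mcoeff q \<rho> else 0)"
      using True by (intro sum.cong) (auto simp: msym_def)
    also have "\<dots> = mcoeff q (shape \<alpha>)"
      using d is_partition_shape[of \<alpha>] finite_partitions_le
      unfolding partitions_le_def vanishes_above_def by (auto simp: sum.delta)
    also have "\<dots> = q \<alpha>"
      using fun_cong[OF of_coeffs_mcoeff[OF q], of \<alpha>] True by (simp add: of_coeffs_def)
    finally show ?thesis by simp
  qed
qed

lemma linear_on_Lambda_eq_sum_msym: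
  assumes "linear_on_Lambda \<theta>" "q \<in> Lambda" "vanishes_above (mcoeff q) d"
  shows "\<theta> q = (\<lambda>\<alpha>. \<Sum>\<rho>\<in>partitions_le d. mcoeff q \<rho> * \<theta> (msym \<rho>) \<alpha>)"
  by (subst Lambda_eq_sum_msym[OF assms(2,3)])
    (rule linear_on_Lambda_sum[OF assms(1) finite_partitions_le msym_in_Lambda])

section \<open>Coefficient shifts\<close>

definition coeff_shift :: "nat multiset \<Rightarrow> sfun \<Rightarrow> sfun" where
  "coeff_shift \<mu> p = of_coeffs (\<lambda>\<nu>. mcoeff p (\<nu> + \<mu>))"

lemma vanishes_above_coeff_shift:
  "is_partition \<mu> \<Longrightarrow> vanishes_above (mcoeff p) d \<Longrightarrow> vanishes_above (mcoeff (coeff_shift \<mu> p)) d"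
  unfolding vanishes_above_def coeff_shift_def by (simp add: mcoeff_of_coeffs)

lemma coeff_shift_in_Lambda: "is_partition \<mu> \<Longrightarrow> p \<in> Lambda \<Longrightarrow> coeff_shift \<mu> p \<in> Lambda"
  by (metis Lambda_vanishes_above vanishes_above_coeff_shift vanishes_above_of_coeffs_iff
      of_coeffs_in_Lambda coeff_shift_def)

lemma coeff_shift_empty: "p \<in> Lambda \<Longrightarrow> coeff_shift {#} p = p"
  unfolding coeff_shift_def by (simp add: of_coeffs_mcoeff)

lemma coeff_shift_coeff_shift:
  "is_partition \<mu> \<Longrightarrow> coeff_shift \<mu> (coeff_shift \<nu> p) = coeff_shift (\<mu> + \<nu>) p"
  unfolding coeff_shift_def by (rule of_coeffs_cong) (simp add: mcoeff_of_coeffs add.assoc)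

lemma mcoeff_eq_coeff_shift_empty:
  "is_partition \<nu> \<Longrightarrow> mcoeff p \<nu> = mcoeff (coeff_shift \<nu> p) {#}"
  unfolding coeff_shift_def by (simp add: mcoeff_of_coeffs)

definition one_part :: "nat \<Rightarrow> nat multiset" where
  "one_part j = (if j = 0 then {#} else {#j#})"

lemma is_partition_one_part [simp]: "is_partition (one_part j)"
  unfolding is_partition_def one_part_def by simp

lemma sum_mset_one_part [simp]: "sum_mset (one_part j) = j"
  unfolding one_part_def by simp

lemma
  assumes "\<beta> \<in> expos"
  shows cons_ex_in_expos: "cons_ex j \<beta> \<in> expos"
    and shape_cons_ex: "shape (cons_ex j \<beta>) = shape \<beta> + one_part j"
proof -
  let ?S = "{n. \<beta> n \<noteq> 0}" and ?J = "if j = 0 then {} else {0::nat}"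
  have fS: "finite ?S" using assms by (simp add: expos_def)
  have supp: "{n. cons_ex j \<beta> n \<noteq> 0} = ?J \<union> Suc ` ?S"
  proof (rule set_eqI)
    show "n \<in> {n. cons_ex j \<beta> n \<noteq> 0} \<longleftrightarrow> n \<in> ?J \<union> Suc ` ?S" for n
      by (cases n) (auto simp: cons_ex_def)
  qed
  show "cons_ex j \<beta> \<in> expos" unfolding expos_def using supp fS by simp
  have "mset_set {n. cons_ex j \<beta> n \<noteq> 0} = mset_set ?J + image_mset Suc (mset_set ?S)"
    unfolding supp using fS by (auto simp: mset_set_Union image_mset_mset_set)
  then show "shape (cons_ex j \<beta>) = shape \<beta> + one_part j"
    unfolding shape_def one_part_def by (simp add: multiset.map_comp comp_def cons_ex_def)
qed

lemma symE_of_coeffs: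
  assumes "vanishes_above f d"
  shows "symE a (of_coeffs f) = of_coeffs (\<lambda>\<nu>. \<Sum>j\<le>d. f (\<nu> + one_part j) * a ^ j)"
proof
  fix \<beta>
  show "symE a (of_coeffs f) \<beta> = of_coeffs (\<lambda>\<nu>. \<Sum>j\<le>d. f (\<nu> + one_part j) * a ^ j) \<beta>"
  proof (cases "\<beta> \<in> expos")
    case False
    then show ?thesis by (simp add: symE_def of_coeffs_def)
  next
    case True
    have f_cons: "of_coeffs f (cons_ex j \<beta>) = f (shape \<beta> + one_part j)" for j
      using cons_ex_in_expos[OF True] shape_cons_ex[OF True] by (simp add: of_coeffs_def)
    have "j \<le> d" if "f (shape \<beta> + one_part j) \<noteq> 0" for j
    proof (rule ccontr)
      assume "\<not> j \<le> d"
      then have "d < sum_mset (shape \<beta> + one_part j)" by simp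
      then show False
        using that assms is_partition_shape[of \<beta>] unfolding vanishes_above_def by simp
    qed
    then have "{j. f (shape \<beta> + one_part j) \<noteq> 0} \<subseteq> {..d}" by auto
    have "symE a (of_coeffs f) \<beta>
        = (\<Sum>j\<in>{j. f (shape \<beta> + one_part j) \<noteq> 0}. f (shape \<beta> + one_part j) * a ^ j)"
      using True by (simp add: symE_def f_cons)
    also have "\<dots> = (\<Sum>j\<le>d. f (shape \<beta> + one_part j) * a ^ j)"
      using \<open>{j. f (shape \<beta> + one_part j) \<noteq> 0} \<subseteq> {..d}\<close>
      by (intro sum.mono_neutral_left) auto
    finally show ?thesis using True by (simp add: of_coeffs_def)
  qed
qed

lemma symE_eq_sum_coeff_shift:
  assumes "p \<in> Lambda" "vanishes_above (mcoeff p) d"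
  shows "symE a p = (\<lambda>\<beta>. \<Sum>j\<le>d. a ^ j * coeff_shift (one_part j) p \<beta>)"
proof -
  have "symE a p = symE a (of_coeffs (mcoeff p))" using of_coeffs_mcoeff[OF assms(1)] by simp
  also have "\<dots> = of_coeffs (\<lambda>\<nu>. \<Sum>j\<le>d. mcoeff p (\<nu> + one_part j) * a ^ j)"
    by (rule symE_of_coeffs[OF assms(2)])
  finally show ?thesis unfolding coeff_shift_def of_coeffs_def by (auto simp: mult.commute)
qed

section \<open>Monomials in the symmetric derivatives\<close>

lemma symD_of_coeffs:
  assumes "0 < i"
  shows "symD i (of_coeffs g) = of_coeffs (\<lambda>\<nu>. of_nat (fact i) * g (\<nu> + {#i#}))"
proof
  fix \<beta>
  have "mcoeff (of_coeffs g) (shape \<beta> + {#i#}) = g (shape \<beta> + {#i#})"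
    using is_partition_shape[of \<beta>] assms by (intro mcoeff_of_coeffs) simp
  then show "symD i (of_coeffs g) \<beta> = of_coeffs (\<lambda>\<nu>. of_nat (fact i) * g (\<nu> + {#i#})) \<beta>"
    unfolding symD_def of_coeffs_def by simp
qed

lemma symD_pow_of_coeffs:
  assumes "0 < i"
  shows "(symD i ^^ n) (of_coeffs g)
       = of_coeffs (\<lambda>\<nu>. of_nat (fact i) ^ n * g (\<nu> + replicate_mset n i))"
proof (induction n)
  case (Suc n)
  have "(symD i ^^ Suc n) (of_coeffs g)
      = of_coeffs (\<lambda>\<nu>. of_nat (fact i) * (of_nat (fact i) ^ n * g (\<nu> + {#i#} + replicate_mset n i)))"
    using Suc symD_of_coeffs[OF assms] by simp
  also have "\<dots> = of_coeffs (\<lambda>\<nu>. of_nat (fact i) ^ Suc n * g (\<nu> + replicate_mset (Suc n) i))"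
    by (rule of_coeffs_cong) (simp add: algebra_simps)
  finally show ?case .
qed simp

definition seq_partition :: "(nat \<Rightarrow> nat) \<Rightarrow> nat multiset" where
  "seq_partition k = (\<Sum>i\<leftarrow>[0..<supp_bound k]. replicate_mset (k i) (Suc i))"

definition Dmono_factor :: "(nat \<Rightarrow> nat) \<Rightarrow> complex" where
  "Dmono_factor k = (\<Prod>i\<leftarrow>[0..<supp_bound k]. of_nat (fact (Suc i)) ^ k i)"

lemma foldr_symD_pow_of_coeffs:
  "foldr (\<lambda>i f. (symD (Suc i) ^^ k i) \<circ> f) xs id (of_coeffs g)
   = of_coeffs (\<lambda>\<nu>. (\<Prod>i\<leftarrow>xs. of_nat (fact (Suc i)) ^ k i)
                     * g (\<nu> + (\<Sum>i\<leftarrow>xs. replicate_mset (k i) (Suc i))))"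
proof (induction xs)
  case (Cons x xs)
  let ?P = "\<Prod>i\<leftarrow>xs. of_nat (fact (Suc i)) ^ k i"
    and ?S = "\<Sum>i\<leftarrow>xs. replicate_mset (k i) (Suc i)"
  have "foldr (\<lambda>i f. (symD (Suc i) ^^ k i) \<circ> f) (x # xs) id (of_coeffs g)
      = (symD (Suc x) ^^ k x) (foldr (\<lambda>i f. (symD (Suc i) ^^ k i) \<circ> f) xs id (of_coeffs g))"
    by simp
  also have "\<dots> = (symD (Suc x) ^^ k x) (of_coeffs (\<lambda>\<nu>. ?P * g (\<nu> + ?S)))"
    unfolding Cons ..
  also have "\<dots> = of_coeffs (\<lambda>\<nu>. of_nat (fact (Suc x)) ^ k x
                                  * (?P * g (\<nu> + replicate_mset (k x) (Suc x) + ?S)))"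
    by (rule symD_pow_of_coeffs) simp
  also have "\<dots> = of_coeffs (\<lambda>\<nu>. (\<Prod>i\<leftarrow>x # xs. of_nat (fact (Suc i)) ^ k i)
                                  * g (\<nu> + (\<Sum>i\<leftarrow>x # xs. replicate_mset (k i) (Suc i))))"
    by (rule of_coeffs_cong) (simp add: add.assoc mult.assoc del: fact_Suc)
  finally show ?case .
qed simp

lemma Dmono_of_coeffs:
  "Dmono k (of_coeffs g) = of_coeffs (\<lambda>\<nu>. Dmono_factor k * g (\<nu> + seq_partition k))"
  unfolding Dmono_def seq_partition_def Dmono_factor_def foldr_symD_pow_of_coeffs ..

lemma Dmono_factor_nonzero: "Dmono_factor k \<noteq> 0"
  unfolding Dmono_factor_def by (auto simp: prod_list_zero_iff simp del: fact_Suc)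

lemma fin_seqs_supp_bound: "k \<in> fin_seqs \<Longrightarrow> supp_bound k \<le> i \<Longrightarrow> k i = 0"
proof -
  assume "k \<in> fin_seqs" "supp_bound k \<le> i"
  then obtain N where "\<forall>n\<in>{i. k i \<noteq> 0}. n < N"
    using finite_nat_set_iff_bounded unfolding fin_seqs_def by blast
  then have "\<exists>N. \<forall>i\<ge>N. k i = 0" by (metis leD mem_Collect_eq)
  then have "\<forall>j\<ge>supp_bound k. k j = 0" unfolding supp_bound_def by (rule LeastI_ex)
  then show "k i = 0" using \<open>supp_bound k \<le> i\<close> by simp
qed

lemma count_seq_partition: "count (seq_partition k) x = (\<Sum>i<supp_bound k. if x = Suc i then k i else 0)"
  unfolding seq_partition_def
  by (simp add: sum_set_upt_conv_sum_list_nat[symmetric] count_sum atLeast0LessThan)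

lemma is_partition_seq_partition: "is_partition (seq_partition k)"
  unfolding is_partition_def by (simp add: count_seq_partition not_in_iff)

lemma count_seq_partition_Suc: "k \<in> fin_seqs \<Longrightarrow> count (seq_partition k) (Suc j) = k j"
  using fin_seqs_supp_bound[of k j] by (auto simp: count_seq_partition sum.delta)

lemma inj_on_seq_partition: "inj_on seq_partition fin_seqs"
  by (rule inj_onI, rule ext) (metis count_seq_partition_Suc)

lemma partition_eq_seq_partition:
  assumes "is_partition \<nu>"
  obtains k where "k \<in> fin_seqs" "seq_partition k = \<nu>"
proof
  let ?k = "\<lambda>i. count \<nu> (Suc i)"
  have "{i. ?k i \<noteq> 0} \<subseteq> (\<lambda>x. x - 1) ` set_mset \<nu>"
    by (auto simp: image_iff intro!: bexI[where x = "Suc _"])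
  then show k: "?k \<in> fin_seqs" unfolding fin_seqs_def by (auto intro: finite_subset)
  show "seq_partition ?k = \<nu>"
  proof (rule multiset_eqI)
    fix x show "count (seq_partition ?k) x = count \<nu> x"
      using assms count_seq_partition_Suc[OF k] is_partition_seq_partition[of ?k]
      unfolding is_partition_def by (cases x) (auto simp: not_in_iff)
  qed
qed

definition seqs_le :: "nat \<Rightarrow> (nat \<Rightarrow> nat) set" where
  "seqs_le d = {k \<in> fin_seqs. sum_mset (seq_partition k) \<le> d}"

lemma seq_partition_image_seqs_le: "seq_partition ` seqs_le d = partitions_le d"
proof
  show "seq_partition ` seqs_le d \<subseteq> partitions_le d"
    unfolding seqs_le_def partitions_le_def using is_partition_seq_partition by auto
  show "partitions_le d \<subseteq> seq_partition ` seqs_le d"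
  proof
    fix \<nu> assume "\<nu> \<in> partitions_le d"
    then have \<nu>: "is_partition \<nu>" "sum_mset \<nu> \<le> d" unfolding partitions_le_def by auto
    obtain k where "k \<in> fin_seqs" "seq_partition k = \<nu>"
      using partition_eq_seq_partition[OF \<nu>(1)] .
    then show "\<nu> \<in> seq_partition ` seqs_le d" using \<nu>(2) unfolding seqs_le_def by force
  qed
qed

lemma inj_on_seqs_le: "inj_on seq_partition (seqs_le d)"
  using inj_on_seq_partition unfolding seqs_le_def by (rule inj_on_subset) auto

lemma finite_seqs_le: "finite (seqs_le d)"
  using finite_partitions_le seq_partition_image_seqs_le inj_on_seqs_le
  by (metis finite_imageD)

lemma Dmono_of_coeffs_eq_zero:
  assumes "vanishes_above f d" "k \<in> fin_seqs" "k \<notin> seqs_le d"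
  shows "Dmono k (of_coeffs f) = (\<lambda>_. 0)"
proof -
  have d: "d < sum_mset (seq_partition k)" using assms(2,3) unfolding seqs_le_def by simp
  have "of_coeffs (\<lambda>\<nu>. Dmono_factor k * f (\<nu> + seq_partition k)) = of_coeffs (\<lambda>_. 0)"
  proof (rule of_coeffs_cong)
    fix \<nu> assume "is_partition \<nu>"
    then have "f (seq_partition k + \<nu>) = 0"
      using vanishes_above_add[OF assms(1) is_partition_seq_partition _ d] by blast
    then show "Dmono_factor k * f (\<nu> + seq_partition k) = 0" by (simp add: add.commute)
  qed
  then show ?thesis by (simp add: Dmono_of_coeffs of_coeffs_zero)
qed

lemma Dseries_of_coeffs:
  assumes "vanishes_above f d"
  shows "Dseries c (of_coeffs f)
       = of_coeffs (\<lambda>\<nu>. \<Sum>k\<in>seqs_le d. c k * Dmono_factor k * f (\<nu> + seq_partition k))"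
proof
  fix \<beta>
  let ?K = "{k \<in> fin_seqs. Dmono k (of_coeffs f) \<noteq> (\<lambda>_. 0)}"
  have K: "?K \<subseteq> seqs_le d" using Dmono_of_coeffs_eq_zero[OF assms] by blast
  have "seqs_le d \<subseteq> fin_seqs" unfolding seqs_le_def by auto
  then have "\<forall>k\<in>seqs_le d - ?K. c k * Dmono k (of_coeffs f) \<beta> = 0" by auto
  then have "Dseries c (of_coeffs f) \<beta> = (\<Sum>k\<in>seqs_le d. c k * Dmono k (of_coeffs f) \<beta>)"
    unfolding Dseries_def by (rule sum.mono_neutral_left[OF finite_seqs_le K])
  also have "\<dots> = (\<Sum>k\<in>seqs_le d.
                      c k * of_coeffs (\<lambda>\<nu>. Dmono_factor k * f (\<nu> + seq_partition k)) \<beta>)"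
    by (simp only: Dmono_of_coeffs)
  finally show "Dseries c (of_coeffs f) \<beta>
      = of_coeffs (\<lambda>\<nu>. \<Sum>k\<in>seqs_le d. c k * Dmono_factor k * f (\<nu> + seq_partition k)) \<beta>"
    by (simp add: of_coeffs_def mult.assoc)
qed

section \<open>Operators commuting with the shifts\<close>

lemma commute_symE_imp_commute_coeff_shift:
  assumes lin: "linear_on_Lambda \<theta>" and p: "p \<in> Lambda"
    and comm: "\<And>a. symE a (\<theta> p) = \<theta> (symE a p)"
  shows "coeff_shift (one_part j) (\<theta> p) = \<theta> (coeff_shift (one_part j) p)"
proof
  fix \<beta>
  have \<theta>p: "\<theta> p \<in> Lambda" using linear_on_Lambda_in_Lambda[OF lin p] .
  obtain d where d: "vanishes_above (mcoeff p) d" using Lambda_vanishes_above[OF p] .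
  obtain e where e: "vanishes_above (mcoeff (\<theta> p)) e" using Lambda_vanishes_above[OF \<theta>p] .
  define D where "D = max j (max d e)"
  have D: "vanishes_above (mcoeff p) D" "vanishes_above (mcoeff (\<theta> p)) D"
    by (rule vanishes_above_mono[OF d], simp add: D_def) (rule vanishes_above_mono[OF e], simp add: D_def)
  have "\<forall>a. (\<Sum>i\<le>D. coeff_shift (one_part i) (\<theta> p) \<beta> * a ^ i)
      = (\<Sum>i\<le>D. \<theta> (coeff_shift (one_part i) p) \<beta> * a ^ i)"
  proof
    fix a
    have "(\<lambda>\<beta>. \<Sum>i\<le>D. a ^ i * coeff_shift (one_part i) (\<theta> p) \<beta>) = symE a (\<theta> p)"
      using symE_eq_sum_coeff_shift[OF \<theta>p D(2)] by simp
    also have "\<dots> = \<theta> (\<lambda>\<beta>. \<Sum>i\<le>D. a ^ i * coeff_shift (one_part i) p \<beta>)"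
      using comm symE_eq_sum_coeff_shift[OF p D(1)] by simp
    also have "\<dots> = (\<lambda>\<beta>. \<Sum>i\<le>D. a ^ i * \<theta> (coeff_shift (one_part i) p) \<beta>)"
      using p by (intro linear_on_Lambda_sum[OF lin]) (auto intro: coeff_shift_in_Lambda)
    finally have "(\<Sum>i\<le>D. a ^ i * coeff_shift (one_part i) (\<theta> p) \<beta>)
        = (\<Sum>i\<le>D. a ^ i * \<theta> (coeff_shift (one_part i) p) \<beta>)"
      by (rule fun_cong)
    then show "(\<Sum>i\<le>D. coeff_shift (one_part i) (\<theta> p) \<beta> * a ^ i)
        = (\<Sum>i\<le>D. \<theta> (coeff_shift (one_part i) p) \<beta> * a ^ i)"
      by (simp add: mult.commute)
  qed
  then have "\<forall>i\<le>D. coeff_shift (one_part i) (\<theta> p) \<beta> = \<theta> (coeff_shift (one_part i) p) \<beta>"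
    by (rule polyfun_eq_coeffs[THEN iffD1])
  then show "coeff_shift (one_part j) (\<theta> p) \<beta> = \<theta> (coeff_shift (one_part j) p) \<beta>"
    unfolding D_def by simp
qed

lemma commute_coeff_shift_partition:
  assumes lin: "linear_on_Lambda \<theta>"
    and comm: "\<And>x q. 0 < x \<Longrightarrow> q \<in> Lambda \<Longrightarrow> coeff_shift {#x#} (\<theta> q) = \<theta> (coeff_shift {#x#} q)"
    and "is_partition \<mu>" "p \<in> Lambda"
  shows "coeff_shift \<mu> (\<theta> p) = \<theta> (coeff_shift \<mu> p)"
  using assms(3,4)
proof (induction \<mu> arbitrary: p)
  case empty
  then show ?case using coeff_shift_empty linear_on_Lambda_in_Lambda[OF lin] by simp
next
  case (add x \<mu>)
  then have x: "0 < x" and \<mu>: "is_partition \<mu>" by auto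
  have "coeff_shift (add_mset x \<mu>) (\<theta> p) = coeff_shift {#x#} (coeff_shift \<mu> (\<theta> p))"
    using coeff_shift_coeff_shift[of "{#x#}" \<mu>] x by simp
  also have "\<dots> = coeff_shift {#x#} (\<theta> (coeff_shift \<mu> p))"
    using add.IH \<mu> add.prems(2) by simp
  also have "\<dots> = \<theta> (coeff_shift {#x#} (coeff_shift \<mu> p))"
    using comm x coeff_shift_in_Lambda[OF \<mu> add.prems(2)] by simp
  also have "\<dots> = \<theta> (coeff_shift (add_mset x \<mu>) p)"
    using coeff_shift_coeff_shift[of "{#x#}" \<mu>] x by simp
  finally show ?case .
qed

lemma mcoeff_commuting_operator:
  assumes lin: "linear_on_Lambda \<theta>"
    and comm: "\<And>\<mu> q. is_partition \<mu> \<Longrightarrow> q \<in> Lambda \<Longrightarrow> coeff_shift \<mu> (\<theta> q) = \<theta> (coeff_shift \<mu> q)"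
    and p: "p \<in> Lambda" and d: "vanishes_above (mcoeff p) d" and \<nu>: "is_partition \<nu>"
  shows "mcoeff (\<theta> p) \<nu> = (\<Sum>\<rho>\<in>partitions_le d. mcoeff (\<theta> (msym \<rho>)) {#} * mcoeff p (\<nu> + \<rho>))"
proof -
  have "mcoeff (\<theta> p) \<nu> = mcoeff (\<theta> (coeff_shift \<nu> p)) {#}"
    using mcoeff_eq_coeff_shift_empty[OF \<nu>] comm[OF \<nu> p] by simp
  also have "\<dots> = (\<Sum>\<rho>\<in>partitions_le d. mcoeff (coeff_shift \<nu> p) \<rho> * mcoeff (\<theta> (msym \<rho>)) {#})"
    using linear_on_Lambda_eq_sum_msym[OF lin coeff_shift_in_Lambda[OF \<nu> p]
        vanishes_above_coeff_shift[OF \<nu> d]]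
    by (simp add: mcoeff_def)
  also have "\<dots> = (\<Sum>\<rho>\<in>partitions_le d. mcoeff (\<theta> (msym \<rho>)) {#} * mcoeff p (\<nu> + \<rho>))"
    by (intro sum.cong) (auto simp: partitions_le_def coeff_shift_def mcoeff_of_coeffs add.commute)
  finally show ?thesis .
qed

lemma commute_symE_imp_Dseries:
  assumes lin: "linear_on_Lambda \<theta>"
    and comm: "\<forall>a. \<forall>p\<in>Lambda. symE a (\<theta> p) = \<theta> (symE a p)"
  obtains c where "\<forall>p\<in>Lambda. \<theta> p = Dseries c p"
proof
  have shift_comm: "coeff_shift \<mu> (\<theta> q) = \<theta> (coeff_shift \<mu> q)"
    if "is_partition \<mu>" "q \<in> Lambda" for \<mu> q
  proof (rule commute_coeff_shift_partition[OF lin _ that])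
    fix x :: nat and q :: sfun assume "0 < x" "q \<in> Lambda"
    then show "coeff_shift {#x#} (\<theta> q) = \<theta> (coeff_shift {#x#} q)"
      using commute_symE_imp_commute_coeff_shift[OF lin, of q x] comm by (simp add: one_part_def)
  qed
  define c where "c k = mcoeff (\<theta> (msym (seq_partition k))) {#} / Dmono_factor k" for k
  show "\<forall>p\<in>Lambda. \<theta> p = Dseries c p"
  proof
    fix p assume p: "p \<in> Lambda"
    obtain d where d: "vanishes_above (mcoeff p) d" using Lambda_vanishes_above[OF p] .
    have "\<theta> p = of_coeffs (mcoeff (\<theta> p))"
      using of_coeffs_mcoeff linear_on_Lambda_in_Lambda[OF lin p] by simp
    also have "\<dots> = of_coeffs (\<lambda>\<nu>. \<Sum>k\<in>seqs_le d.
                       c k * Dmono_factor k * mcoeff p (\<nu> + seq_partition k))"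
    proof (rule of_coeffs_cong)
      fix \<nu> assume \<nu>: "is_partition \<nu>"
      have "mcoeff (\<theta> p) \<nu>
          = (\<Sum>\<rho>\<in>partitions_le d. mcoeff (\<theta> (msym \<rho>)) {#} * mcoeff p (\<nu> + \<rho>))"
        by (rule mcoeff_commuting_operator[OF lin _ p d \<nu>]) (rule shift_comm)
      also have "\<dots> = (\<Sum>\<rho>\<in>seq_partition ` seqs_le d.
                   mcoeff (\<theta> (msym \<rho>)) {#} * mcoeff p (\<nu> + \<rho>))"
        by (simp only: seq_partition_image_seqs_le)
      also have "\<dots> = (\<Sum>k\<in>seqs_le d. c k * Dmono_factor k * mcoeff p (\<nu> + seq_partition k))"
        by (simp add: sum.reindex[OF inj_on_seqs_le] c_def Dmono_factor_nonzero)
      finally show "mcoeff (\<theta> p) \<nu> = \<dots>" .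
    qed
    also have "\<dots> = Dseries c p"
      using Dseries_of_coeffs[OF d] of_coeffs_mcoeff[OF p] by simp
    finally show "\<theta> p = Dseries c p" .
  qed
qed

lemma
  assumes p: "p \<in> Lambda"
  shows symE_in_Lambda: "symE a p \<in> Lambda"
    and symE_Dseries: "symE a (Dseries c p) = Dseries c (symE a p)"
proof -
  obtain d where d: "vanishes_above (mcoeff p) d" using Lambda_vanishes_above[OF p] .
  define f where "f = mcoeff p"
  define g where "g \<nu> = (\<Sum>j\<le>d. f (\<nu> + one_part j) * a ^ j)" for \<nu>
  define h where "h \<nu> = (\<Sum>k\<in>seqs_le d. c k * Dmono_factor k * f (\<nu> + seq_partition k))" for \<nu>
  have f: "vanishes_above f d" and p_eq: "p = of_coeffs f"
    using d of_coeffs_mcoeff[OF p] unfolding f_def by simp_all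
  have g: "vanishes_above g d" and h: "vanishes_above h d"
    unfolding vanishes_above_def g_def h_def
    using vanishes_above_add[OF f] is_partition_seq_partition by simp_all
  have symE_p: "symE a p = of_coeffs g"
    unfolding p_eq g_def by (rule symE_of_coeffs[OF f])
  then show "symE a p \<in> Lambda" using of_coeffs_in_Lambda[OF g] by simp
  have "symE a (Dseries c p) = symE a (of_coeffs h)"
    unfolding p_eq h_def Dseries_of_coeffs[OF f] ..
  also have "\<dots> = of_coeffs (\<lambda>\<nu>. \<Sum>j\<le>d. h (\<nu> + one_part j) * a ^ j)"
    by (rule symE_of_coeffs[OF h])
  also have "\<dots> = of_coeffs (\<lambda>\<nu>. \<Sum>k\<in>seqs_le d. c k * Dmono_factor k * g (\<nu> + seq_partition k))"
    unfolding g_def h_def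
    by (simp add: sum_distrib_left sum_distrib_right sum.swap[of _ "{..d}"] ac_simps)
  also have "\<dots> = Dseries c (symE a p)"
    unfolding symE_p by (rule Dseries_of_coeffs[OF g, symmetric])
  finally show "symE a (Dseries c p) = Dseries c (symE a p)" .
qed

theorem mainTheorem7:
  fixes \<theta> :: "sfun \<Rightarrow> sfun"
  assumes "linear_on_Lambda \<theta>"
  shows "(\<forall>a. \<forall>p\<in>Lambda. symE a (\<theta> p) = \<theta> (symE a p))
     \<longleftrightarrow> (\<exists>c :: (nat \<Rightarrow> nat) \<Rightarrow> complex. \<forall>p\<in>Lambda. \<theta> p = Dseries c p)"
proof
  assume "\<forall>a. \<forall>p\<in>Lambda. symE a (\<theta> p) = \<theta> (symE a p)"
  then show "\<exists>c. \<forall>p\<in>Lambda. \<theta> p = Dseries c p"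
    using commute_symE_imp_Dseries[OF assms] by metis
next
  assume "\<exists>c. \<forall>p\<in>Lambda. \<theta> p = Dseries c p"
  then obtain c where "\<forall>p\<in>Lambda. \<theta> p = Dseries c p" ..
  then show "\<forall>a. \<forall>p\<in>Lambda. symE a (\<theta> p) = \<theta> (symE a p)"
    by (simp add: symE_in_Lambda symE_Dseries)
qed

end
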